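(* Let $E_1,\dots,E_{k+1}$ be a $\mathbb{Q}$-nef partition of a complete fan $\Sigma$ and $V=\{v_1,\dots,v_k\}$ an amenable collection of vectors subordinate to it. Then the monomials of the Laurent polynomial $\phi_V^*w$ correspond (as points of $M\cap M_V$) exactly to all possible sums $p+\sum_{s=1}^\ell u_s$ with $p\in E_{k+1}$ and $u_1,\dots,u_\ell\in E_1\cup\dots\cup E_k$ (repetitions allowed, $\ell\ge0$) such that $\langle v_i,p+\sum_{s=1}^\ell u_s\rangle=0$ for all $1\le i\le k$.
   Context: $M$ lattice of rank $n$, $N=\mathrm{Hom}(M,\mathbb{Z})$; $\Sigma$ complete fan in $M_\mathbb{R}$, $\Sigma[1]$ primitive ray generators. $\mathbb{Q}$-nef partition: ordered partition $\Sigma[1]=E_1\sqcup\dots\sqcup E_{k+1}$ with convex rational $\Sigma$-piecewise linear functions $\varphi_i$, $\varphi_i(\rho)=\delta_{ij}$ on $E_j$. Amenable collection: $\langle v_i,\rho\rangle=-1$ on $E_i$, $\ge0$ on $E_j$ for $i<j\le k+1$, $=0$ on $E_j$ for $j<i$. $M_V=\{u\in M_\mathbb{R}:\langle v_i,u\rangle=0\ \forall i\}$. Fix $a_\rho\in\mathbb{C}^\times$, extend $V$ to a basis $v_1,\dots,v_n$ of $N$, coordinates $x_j$ on $(\mathbb{C}^\times)^n$ with $x^\rho=\prod_jx_j^{\langle v_j,\rho\rangle}$. $X^\vee:\ \sum_{\rho\in E_i}a_\rho x^\rho=1$ ($1\le i\le k$), $w=\sum_{\rho\in E_{k+1}}a_\rho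 x^\rho$. Recursively $f_i=\sum_{\rho\in E_i}a_\rho\prod_{j<i}f_j^{\langle v_j,\rho\rangle}\prod_{j>k}x_j^{\langle v_j,\rho\rangle}$, and $\phi_V(x_{k+1},\dots,x_n)=(f_1,\dots,f_k,x_{k+1},\dots,x_n)$. A monomial $\prod_{j>k}x_j^{m_j}$ corresponds to the unique $u\in M\cap M_V$ with $\langle v_j,u\rangle=m_j$ for $j>k$. *)

theory Defs
  imports "HOL-Analysis.Analysis" "HOL-Library.Poly_Mapping"
begin

section \<open>Lattice M = Z^n inside M_R = R^n, dual lattice N = Z^n, pairing = inner product\<close>

definition lattice_pt :: "real^'n \<Rightarrow> bool" where
  "lattice_pt x \<longleftrightarrow> (\<forall>i. x $ i \<in> \<int>)"

definition pair :: "real^'n \<Rightarrow> real^'n \<Rightarrow> int" where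
  "pair v u = \<lfloor>v \<bullet> u\<rfloor>"

definition zbasis :: "(nat \<Rightarrow> real^'n) \<Rightarrow> bool" where
  "zbasis v \<longleftrightarrow> (\<forall>j\<in>{1..CARD('n)}. lattice_pt (v j)) \<and>
     (\<forall>w. lattice_pt w \<longrightarrow>
        (\<exists>!c::nat \<Rightarrow> int. (\<forall>j. j \<notin> {1..CARD('n)} \<longrightarrow> c j = 0) \<and>
             w = (\<Sum>j\<in>{1..CARD('n)}. of_int (c j) *\<^sub>R v j)))"

definition pcone :: "(real^'n) set \<Rightarrow> (real^'n) set" where
  "pcone G = {x. \<exists>c. (\<forall>g\<in>G. c g \<ge> 0) \<and> x = (\<Sum>g\<in>G. c g *\<^sub>R g)}"

definition rat_sc_cone :: "(real^'n) set \<Rightarrow> bool" where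
  "rat_sc_cone \<sigma> \<longleftrightarrow> (\<exists>G. finite G \<and> (\<forall>g\<in>G. lattice_pt g) \<and> \<sigma> = pcone G) \<and>
     (\<forall>x. x \<in> \<sigma> \<and> - x \<in> \<sigma> \<longrightarrow> x = 0)"

definition fan :: "(real^'n) set set \<Rightarrow> bool" where
  "fan \<Sigma> \<longleftrightarrow> finite \<Sigma> \<and> (\<forall>\<sigma>\<in>\<Sigma>. rat_sc_cone \<sigma>) \<and>
     (\<forall>\<sigma>\<in>\<Sigma>. \<forall>F. F face_of \<sigma> \<and> F \<noteq> {} \<longrightarrow> F \<in> \<Sigma>) \<and>
     (\<forall>\<sigma>\<in>\<Sigma>. \<forall>\<tau>\<in>\<Sigma>. (\<sigma> \<inter> \<tau>) face_of \<sigma> \<and> (\<sigma> \<inter> \<tau>) face_of \<tau>)"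

definition complete_fan :: "(real^'n) set set \<Rightarrow> bool" where
  "complete_fan \<Sigma> \<longleftrightarrow> fan \<Sigma> \<and> \<Union>\<Sigma> = UNIV"

definition primitive :: "real^'n \<Rightarrow> bool" where
  "primitive \<rho> \<longleftrightarrow> lattice_pt \<rho> \<and> \<rho> \<noteq> 0 \<and> (\<forall>t::real. 0 < t \<and> t < 1 \<longrightarrow> \<not> lattice_pt (t *\<^sub>R \<rho>))"

definition rays :: "(real^'n) set set \<Rightarrow> (real^'n) set" where
  "rays \<Sigma> = {\<rho>. primitive \<rho> \<and> pcone {\<rho>} \<in> \<Sigma>}"

definition sigma_pl_rational :: "(real^'n) set set \<Rightarrow> (real^'n \<Rightarrow> real) \<Rightarrow> bool" where
  "sigma_pl_rational \<Sigma> \<phi> \<longleftrightarrow>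
     (\<forall>\<sigma>\<in>\<Sigma>. \<exists>m::real^'n. (\<forall>i. m $ i \<in> \<rat>) \<and> (\<forall>x\<in>\<sigma>. \<phi> x = m \<bullet> x))"

definition Qnef_partition :: "(real^'n) set set \<Rightarrow> nat \<Rightarrow> (nat \<Rightarrow> (real^'n) set) \<Rightarrow> bool" where
  "Qnef_partition \<Sigma> k E \<longleftrightarrow>
     (\<forall>i\<in>{1..k+1}. E i \<noteq> {}) \<and>
     (\<forall>i\<in>{1..k+1}. \<forall>j\<in>{1..k+1}. i \<noteq> j \<longrightarrow> E i \<inter> E j = {}) \<and>
     (\<Union>i\<in>{1..k+1}. E i) = rays \<Sigma> \<and>
     (\<forall>i\<in>{1..k+1}. \<exists>\<phi>. convex_on UNIV \<phi> \<and> sigma_pl_rational \<Sigma> \<phi> \<and>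
         (\<forall>j\<in>{1..k+1}. \<forall>\<rho>\<in>E j. \<phi> \<rho> = (if i = j then 1 else 0)))"

definition amenable :: "nat \<Rightarrow> (nat \<Rightarrow> (real^'n) set) \<Rightarrow> (nat \<Rightarrow> real^'n) \<Rightarrow> bool" where
  "amenable k E v \<longleftrightarrow>
     (\<forall>i\<in>{1..k}. lattice_pt (v i) \<and>
        (\<forall>\<rho>\<in>E i. pair (v i) \<rho> = -1) \<and>
        (\<forall>j. i < j \<and> j \<le> k+1 \<longrightarrow> (\<forall>\<rho>\<in>E j. pair (v i) \<rho> \<ge> 0)) \<and>
        (\<forall>j. 1 \<le> j \<and> j < i \<longrightarrow> (\<forall>\<rho>\<in>E j. pair (v i) \<rho> = 0)))"

text \<open>Coefficients: complex polynomials in formal indeterminates a_rho (one per ray).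
  Laurent monomials in x_{k+1},...,x_n: exponent vectors (m_j) with m_j = 0 unless k<j<=n.\<close>
type_synonym 'n coef = "((real^'n) \<Rightarrow>\<^sub>0 nat) \<Rightarrow>\<^sub>0 complex"
type_synonym 'n laurent = "(nat \<Rightarrow>\<^sub>0 int) \<Rightarrow>\<^sub>0 'n coef"

definition avar :: "real^'n \<Rightarrow> 'n laurent" where
  "avar \<rho> = Poly_Mapping.single 0 (Poly_Mapping.single (Poly_Mapping.single \<rho> 1) 1)"

definition xmono :: "(nat \<Rightarrow>\<^sub>0 int) \<Rightarrow> 'n laurent" where
  "xmono m = Poly_Mapping.single m 1"

text \<open>exponent vector of prod_{j>k} x_j^{<v_j,u>}\<close>
definition tail_exp :: "nat \<Rightarrow> (nat \<Rightarrow> real^'n) \<Rightarrow> real^'n \<Rightarrow> (nat \<Rightarrow>\<^sub>0 int)" where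
  "tail_exp k v u = (\<Sum>j\<in>{k<..CARD('n)}. Poly_Mapping.single j (pair (v j) u))"

definition fstep :: "nat \<Rightarrow> (nat \<Rightarrow> (real^'n) set) \<Rightarrow> (nat \<Rightarrow> real^'n) \<Rightarrow> (nat \<Rightarrow> 'n laurent) \<Rightarrow> nat \<Rightarrow> 'n laurent" where
  "fstep k E v g i = (\<Sum>\<rho>\<in>E i. avar \<rho> * (\<Prod>j\<in>{1..<i}. g j ^ nat (pair (v j) \<rho>)) * xmono (tail_exp k v \<rho>))"

primrec fpre :: "nat \<Rightarrow> (nat \<Rightarrow> (real^'n) set) \<Rightarrow> (nat \<Rightarrow> real^'n) \<Rightarrow> nat \<Rightarrow> (nat \<Rightarrow> 'n laurent)" where
  "fpre k E v 0 = (\<lambda>j. 0)"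
| "fpre k E v (Suc i) = (fpre k E v i)(Suc i := fstep k E v (fpre k E v i) (Suc i))"

definition ff :: "nat \<Rightarrow> (nat \<Rightarrow> (real^'n) set) \<Rightarrow> (nat \<Rightarrow> real^'n) \<Rightarrow> nat \<Rightarrow> 'n laurent" where
  "ff k E v i = fpre k E v i i"

definition pullback_w :: "nat \<Rightarrow> (nat \<Rightarrow> (real^'n) set) \<Rightarrow> (nat \<Rightarrow> real^'n) \<Rightarrow> 'n laurent" where
  "pullback_w k E v = (\<Sum>\<rho>\<in>E (k+1). avar \<rho> * (\<Prod>j\<in>{1..k}. ff k E v j ^ nat (pair (v j) \<rho>))
                          * xmono (tail_exp k v \<rho>))"

end

theory Submission
  imports Defs
begin

text \<open>The coefficients of the \<open>f\<^sub>i\<close> and of \<open>\<phi>\<^sub>V\<^sup>* w\<close> are polynomials with nonnegative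
  coefficients in the formal variables \<open>a\<^sub>\<rho>\<close>, so no cancellation occurs: the support of a sum
  is the union, and the support of a product the Minkowski sum, of the supports. Hence the support
  of \<open>f\<^sub>i\<close> is the image under \<open>tail_exp\<close> of a set \<open>R\<^sub>i\<close> of lattice points, namely the union over
  \<open>\<rho> \<in> E\<^sub>i\<close> of \<open>\<rho>\<close> plus the Minkowski sum of \<open>\<langle>v\<^sub>j, \<rho>\<rangle>\<close> copies of \<open>R\<^sub>j\<close> for \<open>j < i\<close>.
  By induction on \<open>m\<close>, the Minkowski sum of \<open>d\<^sub>j\<close> copies of \<open>R\<^sub>j\<close> for \<open>j \<le> m\<close> consists exactly
  of the sums of rays from \<open>E\<^sub>1 \<union> \<dots> \<union> E\<^sub>m\<close> whose pairing with \<open>v\<^sub>l\<close> is \<open>-d\<^sub>l\<close> for all \<open>l \<le> m\<close>: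
  only the rays of \<open>E\<^sub>m\<close> pair nontrivially with \<open>v\<^sub>m\<close>, so such a sum contains exactly \<open>d\<^sub>m\<close> of
  them, and the remaining rays can be distributed among these so that each of them, together
  with its share, lies in \<open>R\<^sub>m\<close>. The case \<open>i = k + 1\<close> is the statement.\<close>

section \<open>Polynomials without cancellation\<close>

locale positive_cone =
  fixes P :: "'a::comm_semiring_1 \<Rightarrow> bool"
  assumes zero [simp]: "P 0"
    and one [simp]: "P 1"
    and add_closed: "P x \<Longrightarrow> P y \<Longrightarrow> P (x + y)"
    and mult_closed: "P x \<Longrightarrow> P y \<Longrightarrow> P (x * y)"
    and add_eq_0: "P x \<Longrightarrow> P y \<Longrightarrow> x + y = 0 \<Longrightarrow> x = 0"
    and mult_neq_0: "P x \<Longrightarrow> P y \<Longrightarrow> x \<noteq> 0 \<Longrightarrow> y \<noteq> 0 \<Longrightarrow> x * y \<noteq> 0"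
begin

lemma sum_closed: "(\<And>x. x \<in> A \<Longrightarrow> P (f x)) \<Longrightarrow> P (sum f A)"
  by (induction A rule: infinite_finite_induct) (auto intro: add_closed)

lemma prod_closed: "(\<And>x. x \<in> A \<Longrightarrow> P (f x)) \<Longrightarrow> P (prod f A)"
  by (induction A rule: infinite_finite_induct) (auto intro: mult_closed)

lemma power_closed: "P x \<Longrightarrow> P (x ^ n)"
  by (induction n) (auto intro: mult_closed)

lemma sum_neq_0:
  assumes "finite A" and "\<And>x. x \<in> A \<Longrightarrow> P (f x)" and "a \<in> A" and "f a \<noteq> 0"
  shows "sum f A \<noteq> 0"
proof
  assume "sum f A = 0"
  then have "f a + sum f (A - {a}) = 0"
    using sum.remove[OF assms(1,3), of f] by simp
  then have "f a = 0"
    by (rule add_eq_0[rotated 2]) (use assms(2,3) in \<open>auto intro: sum_closed\<close>)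
  with assms(4) show False ..
qed

end

definition coeffwise :: "('b::zero \<Rightarrow> bool) \<Rightarrow> ('a \<Rightarrow>\<^sub>0 'b) \<Rightarrow> bool" where
  "coeffwise P f \<longleftrightarrow> (\<forall>k. P (Poly_Mapping.lookup f k))"

lemma lookup_mult_keys:
  fixes f g :: "'a::monoid_add \<Rightarrow>\<^sub>0 'b::semiring_0"
  shows "Poly_Mapping.lookup (f * g) c =
    (\<Sum>a\<in>Poly_Mapping.keys f. Poly_Mapping.lookup f a *
       (\<Sum>b\<in>Poly_Mapping.keys g. Poly_Mapping.lookup g b when c = a + b))"
proof -
  have "(\<Sum>b. Poly_Mapping.lookup g b when c = a + b) =
      (\<Sum>b\<in>Poly_Mapping.keys g. Poly_Mapping.lookup g b when c = a + b)" for a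
    by (rule Sum_any.expand_superset) (auto simp: in_keys_iff)
  then show ?thesis
    unfolding lookup_mult
    by (subst Sum_any.expand_superset[of "Poly_Mapping.keys f"]) (auto simp: in_keys_iff)
qed

context positive_cone
begin

lemma coeffwise_mult:
  assumes "coeffwise P f" and "coeffwise P g"
  shows "coeffwise P (f * g)"
  unfolding coeffwise_def
proof
  fix c
  show "P (Poly_Mapping.lookup (f * g) c)"
    unfolding lookup_mult_keys[of f g c]
    using assms by (auto intro!: sum_closed mult_closed simp: coeffwise_def when_def)
qed

lemma lookup_mult_neq_0:
  assumes f: "coeffwise P f" and g: "coeffwise P g"
    and a: "a \<in> Poly_Mapping.keys f" and b: "b \<in> Poly_Mapping.keys g"
  shows "Poly_Mapping.lookup (f * g) (a + b) \<noteq> 0"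
proof -
  define S where "S a' = (\<Sum>b'\<in>Poly_Mapping.keys g. Poly_Mapping.lookup g b' when a + b = a' + b')" for a'
  have S: "P (S a')" for a'
    unfolding S_def using g by (intro sum_closed) (simp add: coeffwise_def when_def)
  have "S a \<noteq> 0"
    unfolding S_def using g b by (intro sum_neq_0[where a = b]) (auto simp: coeffwise_def when_def)
  then have "Poly_Mapping.lookup f a * S a \<noteq> 0"
    using f a S by (intro mult_neq_0) (auto simp: coeffwise_def)
  moreover have "P (Poly_Mapping.lookup f a' * S a')" for a'
    using f S by (intro mult_closed) (auto simp: coeffwise_def)
  ultimately show ?thesis
    unfolding lookup_mult_keys[of f g] S_def[symmetric] using a by (intro sum_neq_0[where a = a]) auto
qed

lemma keys_mult_eq:
  assumes "coeffwise P f" and "coeffwise P g"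
  shows "Poly_Mapping.keys (f * g) = Poly_Mapping.keys f + Poly_Mapping.keys g"
proof
  show "Poly_Mapping.keys (f * g) \<subseteq> Poly_Mapping.keys f + Poly_Mapping.keys g"
    using keys_mult[of f g] unfolding set_plus_def by blast
  show "Poly_Mapping.keys f + Poly_Mapping.keys g \<subseteq> Poly_Mapping.keys (f * g)"
    using lookup_mult_neq_0[OF assms] by (auto simp: in_keys_iff elim!: set_plus_elim)
qed

lemma keys_add_eq:
  assumes "coeffwise P f" and "coeffwise P g"
  shows "Poly_Mapping.keys (f + g) = Poly_Mapping.keys f \<union> Poly_Mapping.keys g"
proof (rule set_eqI)
  fix c
  have "Poly_Mapping.lookup f c = 0 \<and> Poly_Mapping.lookup g c = 0"
    if "Poly_Mapping.lookup f c + Poly_Mapping.lookup g c = 0"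
    using that assms add_eq_0 add.commute unfolding coeffwise_def by metis
  then show "c \<in> Poly_Mapping.keys (f + g) \<longleftrightarrow> c \<in> Poly_Mapping.keys f \<union> Poly_Mapping.keys g"
    by (auto simp: in_keys_iff lookup_add)
qed

lemma positive_cone_coeffwise:
  "positive_cone (coeffwise P :: ('b::comm_monoid_add \<Rightarrow>\<^sub>0 'a) \<Rightarrow> bool)"
proof
  fix f g :: "'b \<Rightarrow>\<^sub>0 'a"
  show "coeffwise P 0" and "coeffwise P 1"
    by (auto simp: coeffwise_def lookup_one when_def)
  assume f: "coeffwise P f" and g: "coeffwise P g"
  show "coeffwise P (f + g)"
    using f g by (auto intro: add_closed simp: coeffwise_def lookup_add)
  show "coeffwise P (f * g)"
    using f g by (rule coeffwise_mult)
  show "f = 0" if "f + g = 0"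
    using keys_add_eq[OF f g] that by auto
  show "f * g \<noteq> 0" if f0: "f \<noteq> 0" and g0: "g \<noteq> 0"
  proof -
    obtain a b where "a \<in> Poly_Mapping.keys f" and "b \<in> Poly_Mapping.keys g"
      using f0 g0 by (metis ex_in_conv keys_eq_empty)
    then show ?thesis
      using lookup_mult_neq_0[OF f g] by force
  qed
qed

lemmas coeffwise_sum = positive_cone.sum_closed[OF positive_cone_coeffwise]
lemmas coeffwise_prod = positive_cone.prod_closed[OF positive_cone_coeffwise]
lemmas coeffwise_power = positive_cone.power_closed[OF positive_cone_coeffwise]

lemma keys_sum_eq:
  fixes f :: "'c \<Rightarrow> 'b::comm_monoid_add \<Rightarrow>\<^sub>0 'a"
  assumes "finite A" and "\<And>x. x \<in> A \<Longrightarrow> coeffwise P (f x)"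
  shows "Poly_Mapping.keys (sum f A) = (\<Union>x\<in>A. Poly_Mapping.keys (f x))"
  using assms
proof (induction A rule: finite_induct)
  case (insert x A)
  then have "coeffwise P (f x)" and "coeffwise P (sum f A)"
    by (auto intro: coeffwise_sum)
  with insert show ?case
    by (simp add: keys_add_eq)
qed simp

lemma keys_prod_eq:
  fixes f :: "'c \<Rightarrow> 'b::comm_monoid_add \<Rightarrow>\<^sub>0 'a"
  assumes "finite A" and "\<And>x. x \<in> A \<Longrightarrow> coeffwise P (f x)"
  shows "Poly_Mapping.keys (prod f A) = (\<Sum>x\<in>A. Poly_Mapping.keys (f x))"
  using assms
proof (induction A rule: finite_induct)
  case (insert x A)
  then have "coeffwise P (f x)" and "coeffwise P (prod f A)"
    by (auto intro: coeffwise_prod)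
  with insert show ?case
    by (simp add: keys_mult_eq)
qed simp

lemma keys_power_eq:
  fixes f :: "'b::comm_monoid_add \<Rightarrow>\<^sub>0 'a"
  assumes "coeffwise P f"
  shows "Poly_Mapping.keys (f ^ n) = sum_list (replicate n (Poly_Mapping.keys f))"
  by (induction n) (simp_all add: keys_mult_eq[OF assms coeffwise_power[OF assms]])

end

definition nonneg_real :: "complex \<Rightarrow> bool" where
  "nonneg_real z \<longleftrightarrow> Im z = 0 \<and> 0 \<le> Re z"

lemma positive_cone_nonneg_real: "positive_cone nonneg_real"
  by unfold_locales (auto simp: nonneg_real_def complex_eq_iff)

abbreviation nonneg_coeffs :: "'n::finite laurent \<Rightarrow> bool" where
  "nonneg_coeffs \<equiv> coeffwise (coeffwise nonneg_real)"

interpretation coef: positive_cone "coeffwise nonneg_real :: 'n::finite coef \<Rightarrow> bool"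
  by (intro positive_cone.positive_cone_coeffwise positive_cone_nonneg_real)

lemma nonneg_coeffs_single:
  "coeffwise nonneg_real c \<Longrightarrow> nonneg_coeffs (Poly_Mapping.single m c)"
  by (auto simp: coeffwise_def lookup_single when_def nonneg_real_def)

lemma nonneg_coeffs_avar: "nonneg_coeffs (avar \<rho>)"
  unfolding avar_def
  by (intro nonneg_coeffs_single) (auto simp: coeffwise_def lookup_single when_def nonneg_real_def)

lemma keys_avar: "Poly_Mapping.keys (avar \<rho>) = {0}"
  unfolding avar_def by (metis keys_single lookup_single_eq lookup_zero one_neq_zero)

lemma nonneg_coeffs_xmono: "nonneg_coeffs (xmono m)"
  unfolding xmono_def
  by (intro nonneg_coeffs_single) (auto simp: coeffwise_def lookup_one when_def nonneg_real_def)

lemma keys_xmono: "Poly_Mapping.keys (xmono m :: 'n::finite laurent) = {m}"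
  by (simp add: xmono_def)

section \<open>Minkowski sums\<close>

definition sumset :: "('i \<Rightarrow> 'a::comm_monoid_add set) \<Rightarrow> 'i set \<Rightarrow> ('i \<Rightarrow> nat) \<Rightarrow> 'a set" where
  "sumset R J d = (\<Sum>j\<in>J. sum_list (replicate (d j) (R j)))"

lemma sumset_add: "sumset R J (\<lambda>j. d j + e j) = sumset R J d + sumset R J e"
  by (simp add: sumset_def replicate_add sum.distrib)

lemma sumset_add_sum_list:
  "sumset R J (\<lambda>j. d j + (\<Sum>u\<leftarrow>us. c u j)) = sumset R J d + (\<Sum>u\<leftarrow>us. sumset R J (c u))"
proof (induction us arbitrary: d)
  case (Cons u us)
  have "sumset R J (\<lambda>j. d j + (\<Sum>u\<leftarrow>u # us. c u j)) =
      sumset R J (\<lambda>j. (d j + c u j) + (\<Sum>u\<leftarrow>us. c u j))"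
    by (simp add: add.assoc)
  also have "\<dots> = sumset R J (\<lambda>j. d j + c u j) + (\<Sum>u\<leftarrow>us. sumset R J (c u))"
    by (rule Cons.IH)
  finally show ?case
    by (simp add: sumset_add add.assoc)
qed simp

lemma sumset_Suc:
  "sumset R {1..Suc m} d = sumset R {1..m} d + sum_list (replicate (d (Suc m)) (R (Suc m)))"
  by (simp add: sumset_def)

lemma sum_list_filter_split:
  "(\<Sum>x\<leftarrow>xs. f x) = (\<Sum>x\<leftarrow>filter P xs. f x) + (\<Sum>x\<leftarrow>filter (\<lambda>x. \<not> P x) xs. f x)"
  for f :: "'a \<Rightarrow> 'b::comm_monoid_add"
  by (induction xs) (simp_all add: add_ac)

lemma sum_list_replicate_mono:
  "A \<subseteq> B \<Longrightarrow> sum_list (replicate n A) \<subseteq> sum_list (replicate n B)"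
  for A B :: "'a::comm_monoid_add set"
  by (induction n) (simp_all add: set_plus_mono2)

lemma sum_list_set_mono:
  "(\<And>x. x \<in> set xs \<Longrightarrow> A x \<subseteq> B x) \<Longrightarrow> (\<Sum>x\<leftarrow>xs. A x) \<subseteq> (\<Sum>x\<leftarrow>xs. B x)"
  for A B :: "'a \<Rightarrow> 'b::comm_monoid_add set"
  by (induction xs) (simp_all add: set_plus_mono2)

lemma sum_list_singletons: "(\<Sum>x\<leftarrow>xs. {x}) = {sum_list xs}"
  for xs :: "'a::comm_monoid_add list"
  by (induction xs) (simp_all add: set_plus_def)

lemma image_set_plus:
  assumes "\<And>x y. x \<in> L \<Longrightarrow> y \<in> L \<Longrightarrow> h (x + y) = h x + h y" and "A \<subseteq> L" and "B \<subseteq> L"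
  shows "h ` (A + B) = h ` A + h ` B"
  using assms by (auto simp: set_plus_def image_iff) (metis subsetD)+

context
  fixes L :: "'a::comm_monoid_add set"
  assumes add_closed: "\<And>x y. x \<in> L \<Longrightarrow> y \<in> L \<Longrightarrow> x + y \<in> L" and zero_mem: "0 \<in> L"
begin

lemma set_plus_closed: "A \<subseteq> L \<Longrightarrow> B \<subseteq> L \<Longrightarrow> A + B \<subseteq> L"
  using add_closed by (auto simp: set_plus_def)

lemma sum_list_replicate_closed: "A \<subseteq> L \<Longrightarrow> sum_list (replicate n A) \<subseteq> L"
  by (induction n) (simp_all add: zero_mem set_plus_closed)

lemma sumset_closed: "(\<And>j. j \<in> J \<Longrightarrow> R j \<subseteq> L) \<Longrightarrow> sumset R J d \<subseteq> L"
  unfolding sumset_def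
  by (induction J rule: infinite_finite_induct) (simp_all add: zero_mem set_plus_closed sum_list_replicate_closed)

context
  fixes h :: "'a \<Rightarrow> 'b::comm_monoid_add"
  assumes additive: "\<And>x y. x \<in> L \<Longrightarrow> y \<in> L \<Longrightarrow> h (x + y) = h x + h y" and zero: "h 0 = 0"
begin

lemma image_sum_list_replicate:
  "A \<subseteq> L \<Longrightarrow> h ` sum_list (replicate n A) = sum_list (replicate n (h ` A))"
  by (induction n) (simp_all add: zero sum_list_replicate_closed image_set_plus[OF additive])

lemma image_sumset:
  assumes "\<And>j. j \<in> J \<Longrightarrow> R j \<subseteq> L"
  shows "h ` sumset R J d = sumset (\<lambda>j. h ` R j) J d"
proof -
  have "h ` (\<Sum>j\<in>J. sum_list (replicate (d j) (R j))) =
      sum ((`) h \<circ> (\<lambda>j. sum_list (replicate (d j) (R j)))) J"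
    by (rule sum_set_cond_linear[where P = "\<lambda>A. A \<subseteq> L"])
      (use assms in \<open>auto simp: zero zero_mem set_plus_closed sum_list_replicate_closed image_set_plus[OF additive]\<close>)
  then show ?thesis
    by (simp add: sumset_def image_sum_list_replicate assms)
qed

end

end

lemma lattice_pt_add: "lattice_pt a \<Longrightarrow> lattice_pt b \<Longrightarrow> lattice_pt (a + b)"
  unfolding lattice_pt_def by simp

lemma lattice_pt_zero [simp]: "lattice_pt 0"
  unfolding lattice_pt_def by simp

lemma lattice_pt_sum_list: "(\<And>u. u \<in> set us \<Longrightarrow> lattice_pt u) \<Longrightarrow> lattice_pt (sum_list us)"
  by (induction us) (auto intro: lattice_pt_add)

lemma inner_lattice_pt_Ints: "lattice_pt a \<Longrightarrow> lattice_pt b \<Longrightarrow> a \<bullet> b \<in> \<int>"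
  unfolding lattice_pt_def inner_vec_def by (auto intro!: Ints_sum Ints_mult simp: inner_real_def)

lemma pair_add:
  assumes "lattice_pt w" and "lattice_pt a" and "lattice_pt b"
  shows "pair w (a + b) = pair w a + pair w b"
proof -
  obtain x y where "w \<bullet> a = of_int x" and "w \<bullet> b = of_int y"
    using inner_lattice_pt_Ints assms by (metis Ints_cases)
  then show ?thesis
    unfolding pair_def by (simp add: inner_add_right)
qed

lemma pair_zero [simp]: "pair w 0 = 0"
  unfolding pair_def by simp

lemma pair_sum_list:
  "lattice_pt w \<Longrightarrow> (\<And>u. u \<in> set us \<Longrightarrow> lattice_pt u) \<Longrightarrow> pair w (sum_list us) = (\<Sum>u\<leftarrow>us. pair w u)"
  by (induction us) (auto simp: pair_add lattice_pt_sum_list)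

lemma tail_exp_add:
  assumes "\<And>j. j \<in> {k<..CARD('n)} \<Longrightarrow> lattice_pt (v j)"
    and "lattice_pt (a :: real^'n)" and "lattice_pt b"
  shows "tail_exp k v (a + b) = tail_exp k v a + tail_exp k v b"
  unfolding tail_exp_def using assms by (simp add: pair_add single_add sum.distrib)

lemma tail_exp_zero [simp]: "tail_exp k v 0 = 0"
  unfolding tail_exp_def by simp

lemma fpre_eq_ff: "j \<le> i \<Longrightarrow> fpre k E v i j = ff k E v j"
  by (induction i) (auto simp: ff_def le_Suc_eq)

lemma ff_Suc: "ff k E v (Suc i) = fstep k E v (ff k E v) (Suc i)"
proof -
  have "ff k E v (Suc i) = fstep k E v (fpre k E v i) (Suc i)"
    by (simp add: ff_def)
  also have "\<dots> = fstep k E v (ff k E v) (Suc i)"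
    unfolding fstep_def by (intro sum.cong refl arg_cong2[where f = "(*)"] prod.cong) (auto simp: fpre_eq_ff)
  finally show ?thesis .
qed

lemma nonneg_coeffs_term:
  assumes "\<And>j. j \<in> J \<Longrightarrow> nonneg_coeffs (g j)"
  shows "nonneg_coeffs (avar \<rho> * (\<Prod>j\<in>J. g j ^ e j) * xmono m)"
  using assms
  by (intro coef.coeffwise_mult coef.coeffwise_prod coef.coeffwise_power nonneg_coeffs_avar nonneg_coeffs_xmono)

lemma nonneg_coeffs_ff: "nonneg_coeffs (ff k E v i)"
proof (induction i rule: less_induct)
  case (less i)
  show ?case
  proof (cases i)
    case 0
    then show ?thesis by (simp add: ff_def coeffwise_def nonneg_real_def)
  next
    case (Suc i')
    then show ?thesis
      unfolding Suc ff_Suc fstep_def using less Suc by (intro coef.coeffwise_sum nonneg_coeffs_term) auto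
  qed
qed

lemma pcone_singleton: "pcone {\<rho>} = {t *\<^sub>R \<rho> | t. t \<ge> 0}"
  unfolding pcone_def by auto

lemma primitive_pcone_inj:
  assumes a: "primitive a" and b: "primitive b" and eq: "pcone {a} = pcone {b}"
  shows "a = b"
proof -
  have "a \<in> pcone {a}" and "b \<in> pcone {b}"
    unfolding pcone_singleton by (auto intro: exI[of _ 1])
  then have "b \<in> pcone {a}" and "a \<in> pcone {b}"
    using eq by auto
  then obtain s t where s: "s \<ge> 0" "a = s *\<^sub>R b" and t: "t \<ge> 0" "b = t *\<^sub>R a"
    unfolding pcone_singleton by auto
  have "a \<noteq> 0" and "lattice_pt a" and "lattice_pt b"
    using a b unfolding primitive_def by auto
  have "(s * t - 1) *\<^sub>R a = 0"
    using s t by (simp add: algebra_simps)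
  then have st: "s * t = 1"
    using \<open>a \<noteq> 0\<close> by simp
  then have "t > 0" and "s > 0"
    using s(1) t(1) by (metis less_eq_real_def mult_zero_left mult_zero_right zero_neq_one)+
  have "\<not> t < 1"
    using a \<open>t > 0\<close> t(2) \<open>lattice_pt b\<close> unfolding primitive_def by blast
  moreover have "\<not> s < 1"
    using b \<open>s > 0\<close> s(2) \<open>lattice_pt a\<close> unfolding primitive_def by blast
  then have "t \<le> s * t"
    using \<open>t > 0\<close> by (simp add: mult_le_cancel_right1)
  ultimately have "t = 1"
    using st by linarith
  then show ?thesis
    using t by simp
qed

lemma finite_rays: "fan \<Sigma> \<Longrightarrow> finite (rays \<Sigma>)"
proof -
  assume "fan \<Sigma>"
  then have "finite ((\<lambda>\<rho>. pcone {\<rho>}) ` rays \<Sigma>)"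
    unfolding fan_def rays_def by (auto intro: finite_subset)
  moreover have "inj_on (\<lambda>\<rho>. pcone {\<rho>}) (rays \<Sigma>)"
    unfolding inj_on_def rays_def using primitive_pcone_inj by blast
  ultimately show ?thesis
    using finite_image_iff by blast
qed

section \<open>Balanced sums of rays\<close>

locale amenable_collection =
  fixes k :: nat and E :: "nat \<Rightarrow> (real^'n) set" and v :: "nat \<Rightarrow> real^'n"
  assumes k_le_dim: "k \<le> CARD('n)"
    and finite_E: "\<And>i. 1 \<le> i \<Longrightarrow> i \<le> k + 1 \<Longrightarrow> finite (E i)"
    and lattice_E: "\<And>i \<rho>. 1 \<le> i \<Longrightarrow> i \<le> k + 1 \<Longrightarrow> \<rho> \<in> E i \<Longrightarrow> lattice_pt \<rho>"
    and lattice_v: "\<And>j. 1 \<le> j \<Longrightarrow> j \<le> CARD('n) \<Longrightarrow> lattice_pt (v j)"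
    and pair_own: "\<And>i \<rho>. 1 \<le> i \<Longrightarrow> i \<le> k \<Longrightarrow> \<rho> \<in> E i \<Longrightarrow> pair (v i) \<rho> = -1"
    and pair_later: "\<And>i j \<rho>. 1 \<le> i \<Longrightarrow> i < j \<Longrightarrow> j \<le> k + 1 \<Longrightarrow> \<rho> \<in> E j \<Longrightarrow> 0 \<le> pair (v i) \<rho>"
    and pair_earlier: "\<And>i j \<rho>. 1 \<le> j \<Longrightarrow> j < i \<Longrightarrow> i \<le> k \<Longrightarrow> \<rho> \<in> E j \<Longrightarrow> pair (v i) \<rho> = 0"
begin

abbreviation npair :: "real^'n \<Rightarrow> nat \<Rightarrow> nat" where
  "npair \<rho> l \<equiv> nat (pair (v l) \<rho>)"

definition E_upto :: "nat \<Rightarrow> (real^'n) set" where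
  "E_upto m = (\<Union>l\<in>{1..m}. E l)"

definition balanced :: "nat \<Rightarrow> (nat \<Rightarrow> nat) \<Rightarrow> (real^'n) set" where
  "balanced m d = {sum_list us | us. set us \<subseteq> E_upto m \<and>
     (\<forall>l\<in>{1..m}. (\<Sum>u\<leftarrow>us. pair (v l) u) = - int (d l))}"

text \<open>\<open>exponent_pts i\<close> is the set \<open>R\<^sub>i\<close> above; \<open>i = k + 1\<close> gives the support of \<open>\<phi>\<^sub>V\<^sup>* w\<close>.\<close>

definition exponent_pts :: "nat \<Rightarrow> (real^'n) set" where
  "exponent_pts i = (\<Union>\<rho>\<in>E i. (+) \<rho> ` balanced (i - 1) (npair \<rho>))"

lemma E_upto_Suc: "E_upto (Suc m) = E_upto m \<union> E (Suc m)"
  unfolding E_upto_def by (simp add: atLeastAtMostSuc_conv Un_commute)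

lemma lattice_E_upto: "m \<le> k + 1 \<Longrightarrow> u \<in> E_upto m \<Longrightarrow> lattice_pt u"
  unfolding E_upto_def using lattice_E by auto

lemma pair_E_upto_later:
  assumes "m < l" and "l \<le> k" and "set us \<subseteq> E_upto m"
  shows "(\<Sum>u\<leftarrow>us. pair (v l) u) = 0"
proof -
  have "pair (v l) u = 0" if "u \<in> set us" for u
    using that assms pair_earlier[of _ l u] unfolding E_upto_def by fastforce
  then have "map (pair (v l)) us = map (\<lambda>_. 0) us"
    by simp
  then show ?thesis
    by (metis sum_list_0)
qed

lemma balanced_plus: "balanced m d + balanced m e \<subseteq> balanced m (\<lambda>l. d l + e l)"
proof
  fix x assume "x \<in> balanced m d + balanced m e"
  then obtain us ws where "x = sum_list (us @ ws)"
    and "set us \<subseteq> E_upto m" "\<forall>l\<in>{1..m}. (\<Sum>u\<leftarrow>us. pair (v l) u) = - int (d l)"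
    and "set ws \<subseteq> E_upto m" "\<forall>l\<in>{1..m}. (\<Sum>u\<leftarrow>ws. pair (v l) u) = - int (e l)"
    unfolding balanced_def by (auto elim!: set_plus_elim)
  then show "x \<in> balanced m (\<lambda>l. d l + e l)"
    unfolding balanced_def by (intro CollectI exI[of _ "us @ ws"]) auto
qed

lemma sum_list_replicate_balanced:
  "sum_list (replicate n (balanced m d)) \<subseteq> balanced m (\<lambda>l. n * d l)"
proof (induction n)
  case 0
  show ?case
    unfolding balanced_def by (auto intro!: exI[of _ "[]"])
next
  case (Suc n)
  then have "sum_list (replicate (Suc n) (balanced m d)) \<subseteq> balanced m d + balanced m (\<lambda>l. n * d l)"
    by (simp add: set_plus_mono2)
  also have "\<dots> \<subseteq> balanced m (\<lambda>l. Suc n * d l)"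
    using balanced_plus[of m d "\<lambda>l. n * d l"] by simp
  finally show ?case .
qed

lemma balanced_Suc_zero:
  assumes "m < k"
  shows "balanced m d \<subseteq> balanced (Suc m) (d(Suc m := 0))"
  unfolding balanced_def using assms pair_E_upto_later[of m "Suc m"]
  by (fastforce simp: E_upto_Suc le_Suc_eq)

lemma exponent_pts_Suc_subset:
  assumes "Suc m \<le> k"
  shows "exponent_pts (Suc m) \<subseteq> balanced (Suc m) (\<lambda>l. if l = Suc m then 1 else 0)"
proof
  fix x assume "x \<in> exponent_pts (Suc m)"
  then obtain \<rho> us where \<rho>: "\<rho> \<in> E (Suc m)" and x: "x = sum_list (\<rho> # us)"
    and us: "set us \<subseteq> E_upto m" "\<forall>l\<in>{1..m}. (\<Sum>u\<leftarrow>us. pair (v l) u) = - int (npair \<rho> l)"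
    unfolding exponent_pts_def balanced_def by auto
  have "(\<Sum>u\<leftarrow>\<rho> # us. pair (v l) u) = - int (if l = Suc m then 1 else 0)"
    if "l \<in> {1..Suc m}" for l
  proof (cases "l = Suc m")
    case True
    then show ?thesis
      using pair_own[OF _ assms \<rho>] pair_E_upto_later[OF _ assms us(1)] by simp
  next
    case False
    then have "0 \<le> pair (v l) \<rho>" and "l \<in> {1..m}"
      using that assms pair_later[OF _ _ _ \<rho>, of l] by auto
    then show ?thesis
      using us(2) False by simp
  qed
  moreover have "set (\<rho> # us) \<subseteq> E_upto (Suc m)"
    using \<rho> us(1) by (auto simp: E_upto_Suc)
  ultimately show "x \<in> balanced (Suc m) (\<lambda>l. if l = Suc m then 1 else 0)"
    unfolding balanced_def x by blast
qed

lemma sumset_Suc_subset_balanced: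
  assumes "Suc m \<le> k" and IH: "sumset exponent_pts {1..m} d = balanced m d"
  shows "sumset exponent_pts {1..Suc m} d \<subseteq> balanced (Suc m) d"
proof -
  let ?\<delta> = "\<lambda>l. if l = Suc m then 1 else 0"
  have "sum_list (replicate (d (Suc m)) (exponent_pts (Suc m)))
      \<subseteq> balanced (Suc m) (\<lambda>l. d (Suc m) * ?\<delta> l)"
    using sum_list_replicate_mono[OF exponent_pts_Suc_subset[OF assms(1)]]
      sum_list_replicate_balanced by (rule order_trans)
  then have "sumset exponent_pts {1..Suc m} d
      \<subseteq> balanced (Suc m) (d(Suc m := 0)) + balanced (Suc m) (\<lambda>l. d (Suc m) * ?\<delta> l)"
    unfolding sumset_Suc IH using balanced_Suc_zero assms(1) by (intro set_plus_mono2) auto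
  also have "\<dots> \<subseteq> balanced (Suc m) (\<lambda>l. (d(Suc m := 0)) l + d (Suc m) * ?\<delta> l)"
    by (rule balanced_plus)
  also have "(\<lambda>l. (d(Suc m := 0)) l + d (Suc m) * ?\<delta> l) = d"
    by auto
  finally show ?thesis .
qed

lemma balanced_Suc_decompose:
  assumes "Suc m \<le> k" and "x \<in> balanced (Suc m) d"
  obtains top r where "set top \<subseteq> E (Suc m)" and "length top = d (Suc m)"
    and "r \<in> balanced m (\<lambda>l. d l + (\<Sum>u\<leftarrow>top. npair u l))" and "x = sum_list top + r"
proof -
  obtain us where us: "set us \<subseteq> E_upto (Suc m)" "x = sum_list us"
    and d: "\<forall>l\<in>{1..Suc m}. (\<Sum>u\<leftarrow>us. pair (v l) u) = - int (d l)"
    using assms(2) unfolding balanced_def by blast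
  define top where "top = filter (\<lambda>u. u \<in> E (Suc m)) us"
  define rest where "rest = filter (\<lambda>u. u \<notin> E (Suc m)) us"
  have split: "(\<Sum>u\<leftarrow>us. f u) = (\<Sum>u\<leftarrow>top. f u) + (\<Sum>u\<leftarrow>rest. f u)"
    for f :: "real^'n \<Rightarrow> 'b::comm_monoid_add"
    unfolding top_def rest_def by (rule sum_list_filter_split)
  have top: "set top \<subseteq> E (Suc m)" and rest: "set rest \<subseteq> E_upto m"
    using us(1) by (auto simp: top_def rest_def E_upto_Suc)
  have "(\<Sum>u\<leftarrow>top. pair (v (Suc m)) u) = - int (length top)"
    using top pair_own[OF _ assms(1)] by (induction top) auto
  then have "length top = d (Suc m)"
    using d split[of "pair (v (Suc m))"] pair_E_upto_later[OF _ assms(1) rest] by simp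
  moreover have "\<forall>l\<in>{1..m}. (\<Sum>u\<leftarrow>rest. pair (v l) u) = - int (d l + (\<Sum>u\<leftarrow>top. npair u l))"
  proof
    fix l assume l: "l \<in> {1..m}"
    have "(\<Sum>u\<leftarrow>top. pair (v l) u) = (\<Sum>u\<leftarrow>top. int (npair u l))"
      using top pair_later[of l "Suc m"] l assms(1) by (induction top) auto
    then show "(\<Sum>u\<leftarrow>rest. pair (v l) u) = - int (d l + (\<Sum>u\<leftarrow>top. npair u l))"
      using d l split[of "pair (v l)"] by (simp flip: sum_list_of_nat add: map_map comp_def)
  qed
  then have "sum_list rest \<in> balanced m (\<lambda>l. d l + (\<Sum>u\<leftarrow>top. npair u l))"
    unfolding balanced_def using rest by blast
  moreover have "x = sum_list top + sum_list rest"
    using us(2) split[of "\<lambda>u. u"] by simp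
  ultimately show ?thesis
    using that top by blast
qed

lemma balanced_Suc_subset_sumset:
  assumes "Suc m \<le> k" and IH: "\<And>d. sumset exponent_pts {1..m} d = balanced m d"
  shows "balanced (Suc m) d \<subseteq> sumset exponent_pts {1..Suc m} d"
proof
  fix x assume "x \<in> balanced (Suc m) d"
  then obtain top r where top: "set top \<subseteq> E (Suc m)" "length top = d (Suc m)"
    and r: "r \<in> balanced m (\<lambda>l. d l + (\<Sum>u\<leftarrow>top. npair u l))" and x: "x = sum_list top + r"
    using balanced_Suc_decompose[OF assms(1)] by blast
  from r obtain a b where a: "a \<in> sumset exponent_pts {1..m} d"
    and b: "b \<in> (\<Sum>u\<leftarrow>top. sumset exponent_pts {1..m} (npair u))" and r_eq: "r = a + b"
    unfolding IH[symmetric] sumset_add_sum_list by (auto elim: set_plus_elim)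
  have "sum_list top + b \<in> (\<Sum>u\<leftarrow>top. {u}) + (\<Sum>u\<leftarrow>top. sumset exponent_pts {1..m} (npair u))"
    using b by (auto simp: sum_list_singletons)
  also have "\<dots> = (\<Sum>u\<leftarrow>top. {u} + balanced m (npair u))"
    by (simp only: IH sum_list_addf)
  also have "\<dots> \<subseteq> (\<Sum>u\<leftarrow>top. exponent_pts (Suc m))"
    using top(1) by (intro sum_list_set_mono) (auto simp: exponent_pts_def set_plus_def)
  also have "\<dots> = sum_list (replicate (d (Suc m)) (exponent_pts (Suc m)))"
    by (simp add: map_replicate_const top(2))
  finally show "x \<in> sumset exponent_pts {1..Suc m} d"
    unfolding sumset_Suc x r_eq using a by (metis add.left_commute set_plus_intro)
qed

lemma sumset_exponent_pts: "m \<le> k \<Longrightarrow> sumset exponent_pts {1..m} d = balanced m d"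
proof (induction m arbitrary: d)
  case 0
  then show ?case
    by (auto simp: sumset_def balanced_def E_upto_def intro!: exI[of _ "[]"])
next
  case (Suc m)
  then show ?case
    using sumset_Suc_subset_balanced balanced_Suc_subset_sumset by (simp add: subset_antisym)
qed

section \<open>Supports of the \<open>f\<^sub>i\<close> and of \<open>\<phi>\<^sub>V\<^sup>* w\<close>\<close>

lemma tail_exp_additive:
  "lattice_pt a \<Longrightarrow> lattice_pt b \<Longrightarrow> tail_exp k v (a + b) = tail_exp k v a + tail_exp k v b"
  by (rule tail_exp_add) (auto intro: lattice_v)

lemma lattice_exponent_pts:
  assumes "1 \<le> i" and "i \<le> k + 1"
  shows "exponent_pts i \<subseteq> {x. lattice_pt x}"
proof
  fix x assume "x \<in> exponent_pts i"
  then obtain \<rho> us where "\<rho> \<in> E i" and "set us \<subseteq> E_upto (i - 1)" and "x = \<rho> + sum_list us"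
    unfolding exponent_pts_def balanced_def by blast
  then show "x \<in> {x. lattice_pt x}"
    using assms lattice_E lattice_E_upto[of "i - 1"] by (auto intro!: lattice_pt_add lattice_pt_sum_list)
qed

lemma keys_term:
  assumes "finite J" and g: "\<And>j. j \<in> J \<Longrightarrow> nonneg_coeffs (g j)"
    and keys_g: "\<And>j. j \<in> J \<Longrightarrow> Poly_Mapping.keys (g j) = tail_exp k v ` Q j"
    and Q: "\<And>j. j \<in> J \<Longrightarrow> Q j \<subseteq> {x. lattice_pt x}" and "lattice_pt \<rho>"
  shows "Poly_Mapping.keys (avar \<rho> * (\<Prod>j\<in>J. g j ^ npair \<rho> j) * xmono (tail_exp k v \<rho>)) =
    tail_exp k v ` ((+) \<rho> ` sumset Q J (npair \<rho>))"
proof -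
  have S: "sumset Q J (npair \<rho>) \<subseteq> {x. lattice_pt x}"
    by (rule sumset_closed) (use Q in \<open>auto intro: lattice_pt_add\<close>)
  have "Poly_Mapping.keys (\<Prod>j\<in>J. g j ^ npair \<rho> j) = (\<Sum>j\<in>J. Poly_Mapping.keys (g j ^ npair \<rho> j))"
    using \<open>finite J\<close> g by (intro coef.keys_prod_eq coef.coeffwise_power)
  also have "\<dots> = sumset (\<lambda>j. Poly_Mapping.keys (g j)) J (npair \<rho>)"
    unfolding sumset_def by (intro sum.cong refl coef.keys_power_eq g)
  also have "\<dots> = sumset (\<lambda>j. tail_exp k v ` Q j) J (npair \<rho>)"
    unfolding sumset_def using keys_g by simp
  also have "\<dots> = tail_exp k v ` sumset Q J (npair \<rho>)"
    by (rule image_sumset[of "{x. lattice_pt x}", symmetric]) (use Q in \<open>auto intro: lattice_pt_add tail_exp_additive\<close>)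
  finally have keys_prod: "Poly_Mapping.keys (\<Prod>j\<in>J. g j ^ npair \<rho> j) = tail_exp k v ` sumset Q J (npair \<rho>)" .
  have "tail_exp k v ` ((+) \<rho> ` sumset Q J (npair \<rho>)) =
      (\<lambda>s. tail_exp k v s + tail_exp k v \<rho>) ` sumset Q J (npair \<rho>)"
    unfolding image_image using S \<open>lattice_pt \<rho>\<close> by (intro image_cong) (auto simp: tail_exp_additive add.commute)
  then show ?thesis
    using g keys_prod
    by (simp add: coef.keys_mult_eq coef.coeffwise_mult coef.coeffwise_prod coef.coeffwise_power
        nonneg_coeffs_avar nonneg_coeffs_xmono keys_avar keys_xmono)
      (auto simp: set_plus_def)
qed

lemma keys_fstep_ff:
  assumes "m \<le> k"
    and IH: "\<And>j. 1 \<le> j \<Longrightarrow> j \<le> m \<Longrightarrow> Poly_Mapping.keys (ff k E v j) = tail_exp k v ` exponent_pts j"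
  shows "Poly_Mapping.keys (fstep k E v (ff k E v) (Suc m)) = tail_exp k v ` exponent_pts (Suc m)"
proof -
  let ?term = "\<lambda>\<rho>. avar \<rho> * (\<Prod>j\<in>{1..m}. ff k E v j ^ npair \<rho> j) * xmono (tail_exp k v \<rho>)"
  have "Poly_Mapping.keys (fstep k E v (ff k E v) (Suc m)) = (\<Union>\<rho>\<in>E (Suc m). Poly_Mapping.keys (?term \<rho>))"
    unfolding fstep_def atLeastLessThanSuc_atLeastAtMost using assms finite_E
    by (intro coef.keys_sum_eq nonneg_coeffs_term nonneg_coeffs_ff) auto
  also have "\<dots> = tail_exp k v ` (\<Union>\<rho>\<in>E (Suc m). (+) \<rho> ` sumset exponent_pts {1..m} (npair \<rho>))"
    unfolding image_UN using assms lattice_exponent_pts lattice_E[of "Suc m"]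
    by (intro SUP_cong keys_term refl nonneg_coeffs_ff) auto
  also have "\<dots> = tail_exp k v ` exponent_pts (Suc m)"
    using sumset_exponent_pts[OF assms(1)] by (simp add: exponent_pts_def)
  finally show ?thesis .
qed

lemma keys_ff: "1 \<le> i \<Longrightarrow> i \<le> k \<Longrightarrow> Poly_Mapping.keys (ff k E v i) = tail_exp k v ` exponent_pts i"
proof (induction i rule: less_induct)
  case (less i)
  then obtain m where i: "i = Suc m"
    by (cases i) auto
  with less show ?case
    unfolding i ff_Suc by (intro keys_fstep_ff) auto
qed

lemma keys_pullback_w: "Poly_Mapping.keys (pullback_w k E v) = tail_exp k v ` exponent_pts (Suc k)"
proof -
  have "pullback_w k E v = fstep k E v (ff k E v) (Suc k)"
    by (simp add: pullback_w_def fstep_def atLeastLessThanSuc_atLeastAtMost)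
  then show ?thesis
    using keys_ff keys_fstep_ff[of k] by simp
qed

lemma pair_balance_iff:
  assumes "m \<le> k" and "\<rho> \<in> E (Suc m)" and "set us \<subseteq> E_upto m" and "l \<in> {1..m}"
  shows "pair (v l) (\<rho> + sum_list us) = 0 \<longleftrightarrow> (\<Sum>u\<leftarrow>us. pair (v l) u) = - int (npair \<rho> l)"
proof -
  have "lattice_pt \<rho>" and "lattice_pt (v l)" and "\<And>u. u \<in> set us \<Longrightarrow> lattice_pt u"
    using assms lattice_E[of "Suc m" \<rho>] lattice_v[of l] k_le_dim lattice_E_upto[of m] by auto
  then have "pair (v l) (\<rho> + sum_list us) = pair (v l) \<rho> + (\<Sum>u\<leftarrow>us. pair (v l) u)"
    by (simp add: pair_add pair_sum_list lattice_pt_sum_list)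
  moreover have "0 \<le> pair (v l) \<rho>"
    using assms pair_later[of l "Suc m" \<rho>] by auto
  ultimately show ?thesis
    by auto
qed

lemma exponent_pts_Suc_eq:
  assumes "m \<le> k"
  shows "exponent_pts (Suc m) = {s. \<exists>p\<in>E (Suc m). \<exists>us. set us \<subseteq> E_upto m \<and>
    s = p + sum_list us \<and> (\<forall>l\<in>{1..m}. pair (v l) s = 0)}"
proof (intro set_eqI iffI)
  fix s assume "s \<in> exponent_pts (Suc m)"
  then obtain p us where "p \<in> E (Suc m)" and "set us \<subseteq> E_upto m" and "s = p + sum_list us"
    and "\<forall>l\<in>{1..m}. (\<Sum>u\<leftarrow>us. pair (v l) u) = - int (npair p l)"
    unfolding exponent_pts_def balanced_def by auto
  then show "s \<in> {s. \<exists>p\<in>E (Suc m). \<exists>us. set us \<subseteq> E_upto m \<and>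
      s = p + sum_list us \<and> (\<forall>l\<in>{1..m}. pair (v l) s = 0)}"
    using pair_balance_iff[OF assms] by blast
next
  fix s assume "s \<in> {s. \<exists>p\<in>E (Suc m). \<exists>us. set us \<subseteq> E_upto m \<and>
      s = p + sum_list us \<and> (\<forall>l\<in>{1..m}. pair (v l) s = 0)}"
  then obtain p us where p: "p \<in> E (Suc m)" and us: "set us \<subseteq> E_upto m" and s: "s = p + sum_list us"
    and "\<forall>l\<in>{1..m}. pair (v l) s = 0"
    by blast
  then have "\<forall>l\<in>{1..m}. (\<Sum>u\<leftarrow>us. pair (v l) u) = - int (npair p l)"
    using pair_balance_iff[OF assms p us] by blast
  then have "sum_list us \<in> balanced m (npair p)"
    unfolding balanced_def using us by blast
  then show "s \<in> exponent_pts (Suc m)"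
    unfolding exponent_pts_def using p s by auto
qed

end

lemma amenable_collectionI:
  assumes "complete_fan \<Sigma>" and "k \<le> CARD('n)" and "Qnef_partition \<Sigma> k E"
    and "amenable k E v" and "zbasis v"
  shows "amenable_collection k E (v :: nat \<Rightarrow> real^'n)"
proof
  have E_rays: "E i \<subseteq> rays \<Sigma>" if "1 \<le> i" "i \<le> k + 1" for i
    using assms(3) that unfolding Qnef_partition_def by auto
  show "finite (E i)" if "1 \<le> i" "i \<le> k + 1" for i
    using finite_subset[OF E_rays[OF that] finite_rays] assms(1) unfolding complete_fan_def by blast
  show "lattice_pt \<rho>" if "1 \<le> i" "i \<le> k + 1" "\<rho> \<in> E i" for i \<rho>
    using E_rays[OF that(1,2)] that(3) unfolding rays_def primitive_def by auto
  show "lattice_pt (v j)" if "1 \<le> j" "j \<le> CARD('n)" for j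
    using assms(5) that unfolding zbasis_def by auto
qed (use assms(2,4) in \<open>auto simp: amenable_def\<close>)

theorem proposition2p17:
  fixes \<Sigma> :: "(real^'n) set set" and k :: nat
    and E :: "nat \<Rightarrow> (real^'n) set" and v :: "nat \<Rightarrow> real^'n"
  assumes "complete_fan \<Sigma>"
    and "k \<le> CARD('n)"
    and "Qnef_partition \<Sigma> k E"
    and "amenable k E v"
    and "zbasis v"
  shows "Poly_Mapping.keys (pullback_w k E v) =
    {tail_exp k v s | s. \<exists>p\<in>E (k+1). \<exists>us. set us \<subseteq> (\<Union>i\<in>{1..k}. E i) \<and>
        s = p + sum_list us \<and> (\<forall>i\<in>{1..k}. pair (v i) s = 0)}"
proof -
  interpret amenable_collection k E v
    using amenable_collectionI[OF assms] .
  have "Poly_Mapping.keys (pullback_w k E v) = tail_exp k v ` exponent_pts (Suc k)"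
    by (rule keys_pullback_w)
  also have "exponent_pts (Suc k) = {s. \<exists>p\<in>E (k+1). \<exists>us. set us \<subseteq> (\<Union>i\<in>{1..k}. E i) \<and>
        s = p + sum_list us \<and> (\<forall>i\<in>{1..k}. pair (v i) s = 0)}"
    using exponent_pts_Suc_eq[of k] by (simp add: E_upto_def)
  finally show ?thesis
    by blast
qed

end
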